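(* Let $n\ge 3$ and let $m,a,b,c$ be integers with $m\ge 0$, $a\ge1$, $b\ge 1$, $c\ge 1$ and $a+b+c=n$. Put $$W=(s_{a+b}s_{a+b-1}\cdots s_2)\,(s_1s_2\cdots s_n)\,(s_{n-1}s_{n-2}\cdots s_{a+b+1}).$$ Then $$(m^a,(m+1)^b,m^c)=(s_{a+1}s_{a+2}\cdots s_{a+b-1})\,W^m(\alpha_{a+b}).$$ In particular $(m^a,(m+1)^b,m^c)$ is a positive real root.
   Context: Notation: $(x^a,y^b,z^c)$ denotes the vector in $\mathbb{Z}^n$ whose first $a$ entries equal $x$, next $b$ entries equal $y$ and last $c$ entries equal $z$. The simple roots $\alpha_1,\dots,\alpha_n$ are the standard basis vectors of $\mathbb{Z}^n$. For $1\le i\le n$ the simple reflection $s_i:\mathbb{Z}^n\to\mathbb{Z}^n$ is the linear map which changes only the $i$-th coordinate of $v=(v^1,\dots,v^n)$, replacing $v^i$ by $v^{i-1}+v^{i+1}-v^i$, with indices modulo $n$ in $\{1,\dots,n\}$. Products are compositions of maps (the rightmost factor acts first). Convention: an ascending product $s_js_{j+1}\cdots s_l$ with $l<j$ and a descending product $s_ls_{l-1}\cdots s_j$ with $l<j$ are both the identity map. A real root is a vector $s_{i_1}\cdots s_{i_j}(\alpha_k)$; it is positive if its entries are nonnegative. *)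

theory Defs
  imports Main
begin

text \<open>Vectors of Z^n are represented as integer lists of length n; coordinate i
  (1-based, 1 \<le> i \<le> n) of v is v ! (i - 1).\<close>

definition blockvec :: "nat \<Rightarrow> nat \<Rightarrow> nat \<Rightarrow> int \<Rightarrow> int \<Rightarrow> int \<Rightarrow> int list" where
  "blockvec a b c x y z = replicate a x @ replicate b y @ replicate c z"

definition sroot :: "nat \<Rightarrow> nat \<Rightarrow> int list" where
  "sroot n k = map (\<lambda>j. if j = k - 1 then 1 else 0) [0..<n]"

definition cprev :: "nat \<Rightarrow> nat \<Rightarrow> nat" where
  "cprev n i = (if i = 1 then n else i - 1)"
definition cnext :: "nat \<Rightarrow> nat \<Rightarrow> nat" where
  "cnext n i = (if i = n then 1 else i + 1)"

definition sref :: "nat \<Rightarrow> nat \<Rightarrow> int list \<Rightarrow> int list" where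
  "sref n i v = v[i - 1 := v ! (cprev n i - 1) + v ! (cnext n i - 1) - v ! (i - 1)]"

text \<open>The product s_{i_1} s_{i_2} ... s_{i_j} (composition, rightmost acts first)
  for the word [i_1, ..., i_j].\<close>
definition rword :: "nat \<Rightarrow> nat list \<Rightarrow> int list \<Rightarrow> int list" where
  "rword n w = foldr (\<lambda>i f. sref n i \<circ> f) w id"

definition asc :: "nat \<Rightarrow> nat \<Rightarrow> nat \<Rightarrow> int list \<Rightarrow> int list" where
  "asc n j l = rword n [j..<Suc l]"

definition desc :: "nat \<Rightarrow> nat \<Rightarrow> nat \<Rightarrow> int list \<Rightarrow> int list" where
  "desc n l j = rword n (rev [j..<Suc l])"

definition real_root :: "nat \<Rightarrow> int list \<Rightarrow> bool" where
  "real_root n v \<longleftrightarrow> (\<exists>w k. set w \<subseteq> {1..n} \<and> k \<in> {1..n} \<and> v = rword n w (sroot n k))"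

definition positive_real_root :: "nat \<Rightarrow> int list \<Rightarrow> bool" where
  "positive_real_root n v \<longleftrightarrow> real_root n v \<and> (\<forall>x \<in> set v. x \<ge> 0)"

end

theory Submission
  imports Defs
begin

text \<open>All vectors occurring in the computation consist of at most three constant blocks. A simple
  reflection at an index where the vector switches from one block value to another moves the
  block boundary by one step, so an ascending or descending product of consecutive reflections
  slides a boundary across a whole block. Tracing the boundaries through the three factors of
  W shows W(x^i, y, x^k) = (y^i, 2y - x, y^k); hence W^m(alpha_(a+b)) = (m^(a+b-1), m + 1, m^c),
  and the final ascending product widens the middle block leftwards to width b.\<close>

lemma rword_Nil: "rword n [] = id"
  by (simp add: rword_def)

lemma rword_Cons: "rword n (i # w) = sref n i \<circ> rword n w"
  by (simp add: rword_def)

lemma rword_append: "rword n (u @ w) = rword n u \<circ> rword n w"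
  by (induction u) (auto simp: rword_def)


lemma asc_single: "asc n i i = sref n i"
  by (simp add: asc_def rword_Cons rword_Nil)

lemma desc_single: "desc n i i = sref n i"
  by (simp add: desc_def rword_Cons rword_Nil)

lemma upt_append: "i \<le> j \<Longrightarrow> j \<le> k \<Longrightarrow> [i..<j] @ [j..<k] = [i..<k]"
  using upt_add_eq_append[of i j "k - j"] by simp

lemma asc_split:
  assumes "j \<le> Suc k" "k \<le> l"
  shows "asc n j l = asc n j k \<circ> asc n (Suc k) l"
proof -
  have "[j..<Suc l] = [j..<Suc k] @ [Suc k..<Suc l]"
    using assms by (simp only: upt_append)
  then show ?thesis by (simp only: asc_def rword_append)
qed

lemma desc_split:
  assumes "j \<le> Suc k" "k \<le> l"
  shows "desc n l j = desc n l (Suc k) \<circ> desc n k j"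
proof -
  have "[j..<Suc l] = [j..<Suc k] @ [Suc k..<Suc l]"
    using assms by (simp only: upt_append)
  then show ?thesis by (simp only: desc_def rev_append rword_append)
qed

lemma sref_interior:
  assumes "length (xs @ u # v # w # zs) = n"
  shows "sref n (length xs + 2) (xs @ u # v # w # zs) = xs @ u # (u + w - v) # w # zs"
  using assms by (simp add: sref_def cprev_def cnext_def nth_append list_update_append)

lemma sref_first:
  assumes "length (v # w # ys @ [u]) = n"
  shows "sref n 1 (v # w # ys @ [u]) = (u + w - v) # w # ys @ [u]"
proof -
  have "n = length ys + 3" using assms by simp
  then show ?thesis by (simp add: sref_def cprev_def cnext_def nth_append)
qed

lemma sref_last:
  assumes "length (w # ys @ [u, v]) = n"
  shows "sref n n (w # ys @ [u, v]) = w # ys @ [u, u + w - v]"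
proof -
  have "n = Suc (Suc (Suc (length ys)))" using assms by simp
  then show ?thesis by (simp add: sref_def cprev_def cnext_def nth_append list_update_append)
qed

lemma desc_sweep:
  assumes "length (xs @ y # replicate r x @ x # zs) = n"
  shows "desc n (length xs + r + 1) (length xs + 2) (xs @ y # replicate r x @ x # zs)
       = xs @ y # replicate r y @ x # zs"
  using assms
proof (induction r arbitrary: xs)
  case 0
  then show ?case by (simp add: desc_def rword_Nil)
next
  case (Suc r)
  have "desc n (length xs + Suc r + 1) (length xs + 2)
      = desc n (length (xs @ [y]) + r + 1) (length (xs @ [y]) + 2) \<circ> sref n (length xs + 2)"
    using desc_split[of "length xs + 2" "length xs + 2" "length xs + Suc r + 1" n]
    by (simp add: desc_single)
  moreover have "sref n (length xs + 2) (xs @ y # replicate (Suc r) x @ x # zs)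
      = (xs @ [y]) @ y # replicate r x @ x # zs"
    using Suc.prems sref_interior[of xs y x x "replicate r x @ zs" n]
    by (simp add: replicate_app_Cons_same)
  ultimately show ?case
    using Suc.IH[of "xs @ [y]"] Suc.prems by (simp add: replicate_app_Cons_same)
qed

lemma asc_sweep:
  assumes "length (xs @ x # replicate r x @ y # zs) = n"
  shows "asc n (length xs + 2) (length xs + r + 1) (xs @ x # replicate r x @ y # zs)
       = xs @ x # replicate r y @ y # zs"
  using assms
proof (induction r arbitrary: xs)
  case 0
  then show ?case by (simp add: asc_def rword_Nil)
next
  case (Suc r)
  have "asc n (length xs + 2) (length xs + Suc r + 1)
      = sref n (length xs + 2) \<circ> asc n (length (xs @ [x]) + 2) (length (xs @ [x]) + r + 1)"
    using asc_split[of "length xs + 2" "length xs + 2" "length xs + Suc r + 1" n]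
    by (simp add: asc_single)
  moreover have "sref n (length xs + 2) (xs @ x # x # replicate r y @ y # zs)
      = xs @ x # replicate (Suc r) y @ y # zs"
    using Suc.prems sref_interior[of xs x x y "replicate r y @ zs" n]
    by (simp add: replicate_app_Cons_same)
  ultimately show ?case
    using Suc.IH[of "xs @ [x]"] Suc.prems by simp
qed

lemma desc_tail_sweep:
  assumes "n = i + 1 + k" "1 \<le> k"
  shows "desc n (n - 1) (i + 2) (blockvec i 1 k x y x) = blockvec i k 1 x y x"
proof -
  obtain d where k: "k = Suc d" using assms(2) by (cases k) auto
  have "desc n (length (replicate i x) + d + 1) (length (replicate i x) + 2)
          (replicate i x @ y # replicate d x @ [x]) = replicate i x @ y # replicate d y @ [x]"
    using assms by (intro desc_sweep) (simp add: k)
  then show ?thesis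
    using assms by (simp add: blockvec_def k replicate_append_same replicate_app_Cons_same)
qed

lemma asc_full_cycle:
  assumes "n = i + 1 + k" "1 \<le> i" "1 \<le> k"
  shows "asc n 1 n (blockvec i k 1 x y x) = blockvec 1 i k y x y"
proof -
  obtain p d where i: "i = Suc p" and k: "k = Suc d"
    using assms(2,3) by (cases i; cases k) auto
  have "asc n 1 n = sref n 1 \<circ> asc n 2 n"
    using asc_split[of 1 1 n n] assms by (simp add: asc_single numeral_2_eq_2)
  also have "asc n 2 n = asc n 2 i \<circ> asc n (i + 1) n"
    using asc_split[of 2 i n n] assms by simp
  also have "asc n (i + 1) n = sref n (i + 1) \<circ> asc n (i + 2) n"
    using asc_split[of "i + 1" "i + 1" n n] assms by (simp add: asc_single)
  also have "asc n (i + 2) n = asc n (i + 2) (n - 1) \<circ> sref n n"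
    using asc_split[of "i + 2" "n - 1" n n] assms by (simp add: asc_single)
  finally have "asc n 1 n = sref n 1 \<circ> asc n 2 i \<circ> sref n (i + 1) \<circ> asc n (i + 2) (n - 1) \<circ> sref n n"
    by (simp only: comp_assoc)
  moreover have "sref n n (blockvec i k 1 x y x) = replicate i x @ replicate (Suc k) y"
    using assms sref_last[of x "replicate p x @ replicate d y" y x n]
    by (simp add: blockvec_def i k replicate_append_same replicate_app_Cons_same)
  moreover have "asc n (i + 2) (n - 1) (replicate i x @ replicate (Suc k) y) = replicate i x @ replicate (Suc k) y"
    using assms asc_sweep[of "replicate i x" y d y "[]" n]
    by (simp add: k replicate_append_same replicate_app_Cons_same)
  moreover have "sref n (i + 1) (replicate i x @ replicate (Suc k) y) = replicate (Suc i) x @ replicate k y"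
    using assms sref_interior[of "replicate p x" x y y "replicate d y" n]
    by (simp add: i k replicate_append_same replicate_app_Cons_same)
  moreover have "asc n 2 i (replicate (Suc i) x @ replicate k y) = replicate (Suc i) x @ replicate k y"
    using assms asc_sweep[of "[]" x p x "replicate k y" n]
    by (simp add: i numeral_2_eq_2 replicate_append_same replicate_app_Cons_same)
  moreover have "sref n 1 (replicate (Suc i) x @ replicate k y) = blockvec 1 i k y x y"
    using assms sref_first[of x x "replicate p x @ replicate d y" y n]
    by (simp add: blockvec_def i k replicate_append_same replicate_app_Cons_same)
  ultimately show ?thesis by simp
qed

lemma desc_head_sweep:
  assumes "n = i + 1 + k" "1 \<le> i" "1 \<le> k"
  shows "desc n (i + 1) 2 (blockvec 1 i k y x y) = blockvec i 1 k y (2 * y - x) y"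
proof -
  obtain p d where i: "i = Suc p" and k: "k = Suc d"
    using assms(2,3) by (cases i; cases k) auto
  have "desc n (i + 1) 2 = sref n (i + 1) \<circ> desc n i 2"
    using assms desc_split[of 2 i "i + 1" n] by (simp add: desc_single)
  moreover have "desc n i 2 (y # replicate p x @ x # replicate k y) = y # replicate p y @ x # replicate k y"
    using assms desc_sweep[of "[]" y p x "replicate k y" n] by (simp add: i numeral_2_eq_2)
  moreover have "sref n (i + 1) (replicate p y @ y # x # y # replicate d y) = blockvec i 1 k y (2 * y - x) y"
    using assms sref_interior[of "replicate p y" y x y "replicate d y" n]
    by (simp add: blockvec_def i k replicate_append_same replicate_app_Cons_same)
  ultimately show ?thesis
    by (simp add: blockvec_def i k replicate_append_same replicate_app_Cons_same)
qed

lemma cycle_word_blockvec: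
  assumes "n = i + 1 + k" "1 \<le> i" "1 \<le> k"
  shows "(desc n (i + 1) 2 \<circ> asc n 1 n \<circ> desc n (n - 1) (i + 2)) (blockvec i 1 k x y x)
       = blockvec i 1 k y (2 * y - x) y"
  using desc_tail_sweep[OF assms(1,3)] asc_full_cycle[OF assms] desc_head_sweep[OF assms]
  by (simp only: comp_apply)

lemma asc_blockvec_sweep:
  assumes "n = i + r + 1 + k" "1 \<le> i"
  shows "asc n (i + 1) (i + r) (blockvec (i + r) 1 k x y z) = blockvec i (r + 1) k x y z"
proof -
  obtain p where i: "i = Suc p" using assms(2) by (cases i) auto
  have "asc n (length (replicate p x) + 2) (length (replicate p x) + r + 1)
          (replicate p x @ x # replicate r x @ y # replicate k z)
      = replicate p x @ x # replicate r y @ y # replicate k z"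
    using assms by (intro asc_sweep) (simp add: i)
  then show ?thesis
    by (simp add: blockvec_def i replicate_add replicate_append_same replicate_app_Cons_same)
qed

lemma sroot_eq_blockvec:
  assumes "n = i + 1 + k"
  shows "sroot n (i + 1) = blockvec i 1 k 0 1 0"
proof -
  have "[0..<n] = [0..<i] @ [i..<n]"
    using assms upt_append[of 0 i n] by simp
  also have "[i..<n] = i # [Suc i..<n]"
    using assms upt_conv_Cons[of i n] by simp
  finally have "[0..<n] = [0..<i] @ i # [Suc i..<n]" .
  moreover have "length [Suc i..<n] = k" using assms by simp
  ultimately show ?thesis
    by (simp del: upt_Suc add: sroot_def blockvec_def) (auto intro!: replicate_eqI)
qed

lemma real_root_sroot: "k \<in> {1..n} \<Longrightarrow> real_root n (sroot n k)"
  unfolding real_root_def by (rule exI[of _ "[]"]) (auto simp: rword_Nil)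

lemma real_root_rword:
  assumes "real_root n v" "set u \<subseteq> {1..n}"
  shows "real_root n (rword n u v)"
proof -
  obtain w k where "set w \<subseteq> {1..n}" "k \<in> {1..n}" "v = rword n w (sroot n k)"
    using assms(1) unfolding real_root_def by blast
  then show ?thesis
    using assms(2) unfolding real_root_def
    by (intro exI[of _ "u @ w"] exI[of _ k]) (simp add: rword_append)
qed

lemma real_root_asc: "real_root n v \<Longrightarrow> 1 \<le> j \<Longrightarrow> l \<le> n \<Longrightarrow> real_root n (asc n j l v)"
  unfolding asc_def by (rule real_root_rword) auto

lemma real_root_desc: "real_root n v \<Longrightarrow> 1 \<le> j \<Longrightarrow> l \<le> n \<Longrightarrow> real_root n (desc n l j v)"
  unfolding desc_def by (rule real_root_rword) auto

theorem theorem3p1: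
  fixes n m a b c :: nat
  assumes "n \<ge> 3" and "a \<ge> 1" and "b \<ge> 1" and "c \<ge> 1" and "a + b + c = n"
  defines "W \<equiv> desc n (a + b) 2 \<circ> asc n 1 n \<circ> desc n (n - 1) (a + b + 1)"
  shows "blockvec a b c (int m) (int m + 1) (int m) = asc n (a + 1) (a + b - 1) ((W ^^ m) (sroot n (a + b)))
         \<and> positive_real_root n (blockvec a b c (int m) (int m + 1) (int m))"
proof -
  define i where "i = a + b - 1"
  have n: "n = i + 1 + c" and ab: "a + b = i + 1" and i_pos: "1 \<le> i"
    using assms(2-5) by (auto simp: i_def)
  have W_step: "W (blockvec i 1 c M (M + 1) M) = blockvec i 1 c (M + 1) (M + 2) (M + 1)" for M
    using cycle_word_blockvec[OF n i_pos assms(4), of M "M + 1"]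
    by (simp add: W_def ab add.assoc)
  have W_pow: "(W ^^ m) (sroot n (a + b)) = blockvec i 1 c (int m) (int m + 1) (int m)"
  proof (induction m)
    case 0
    then show ?case using sroot_eq_blockvec[OF n] by (simp add: ab)
  next
    case (Suc m)
    then show ?case using W_step[of "int m"] by (simp add: add.assoc add.commute)
  qed
  have eq: "blockvec a b c (int m) (int m + 1) (int m) = asc n (a + 1) (a + b - 1) ((W ^^ m) (sroot n (a + b)))"
    using asc_blockvec_sweep[of n a "b - 1" c "int m" "int m + 1" "int m"] assms(2-5)
    by (simp add: W_pow i_def)
  have "real_root n ((W ^^ k) (sroot n (a + b)))" for k
    using assms(2-5) by (induction k) (simp_all add: W_def real_root_sroot real_root_asc real_root_desc)
  then have "real_root n (blockvec a b c (int m) (int m + 1) (int m))"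
    using assms(2-5) by (simp add: eq real_root_asc)
  moreover have "\<forall>x \<in> set (blockvec a b c (int m) (int m + 1) (int m)). x \<ge> 0"
    by (auto simp: blockvec_def)
  ultimately show ?thesis
    using eq unfolding positive_real_root_def by blast
qed

end
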